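(* Let $\lambda>0$, $\ell>0$, $a_1,a_2,a_3\in\mathbb{R}$, fix $z>0$, and consider the map $(x_0,y_0)\mapsto(x,y)$ given by $$x=x_0+\frac{\lambda z}{2\pi\ell}\left(a_1+2a_3\frac{x_0}{\ell}-2\frac{x_0y_0}{\ell^2}\right),\qquad y=y_0+\frac{\lambda z}{2\pi\ell}\left(a_2+\frac{3y_0^2-x_0^2}{\ell^2}\right).$$ Let $A'\doteq a_3+\frac{4\pi\ell^2}{3\lambda z}$. Then the set of caustic points of this map (points $(x,y)$ that are images of some $(x_0,y_0)$ at which the Jacobian determinant $\det\partial(x,y)/\partial(x_0,y_0)$ vanishes) is the closed curve $\zeta\in[0,2\pi)\mapsto(x_c(\zeta),y_c(\zeta))$ with $$x_c(\zeta)=a_1\frac{\lambda z}{2\pi\ell}+\frac{\sqrt3\,\lambda z}{2\pi\ell}A'^2\sin^2\!\left(\frac{\zeta}{2}\right)\sin(\zeta),$$ $$y_c(\zeta)=a_2\frac{\lambda z}{2\pi\ell}-\frac{\pi\ell^3}{6\lambda z}+\frac{3\lambda z}{2\pi\ell}A'^2\cos^2\!\left(\frac{\zeta}{2}\right)\cos(\zeta).$$ *)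

theory Defs
  imports "HOL-Analysis.Analysis"
begin

definition lens_map :: "real \<Rightarrow> real \<Rightarrow> real \<Rightarrow> real \<Rightarrow> real \<Rightarrow> real \<Rightarrow> real \<times> real \<Rightarrow> real \<times> real" where
  "lens_map lam l a1 a2 a3 z = (\<lambda>(x0, y0).
     (x0 + lam * z / (2 * pi * l) * (a1 + 2 * a3 * x0 / l - 2 * x0 * y0 / l^2),
      y0 + lam * z / (2 * pi * l) * (a2 + (3 * y0^2 - x0^2) / l^2)))"

definition jacobian_det :: "(real \<times> real \<Rightarrow> real \<times> real) \<Rightarrow> real \<times> real \<Rightarrow> real" where
  "jacobian_det F p =
     deriv (\<lambda>t. fst (F (t, snd p))) (fst p) * deriv (\<lambda>t. snd (F (fst p, t))) (snd p)
   - deriv (\<lambda>t. fst (F (fst p, t))) (snd p) * deriv (\<lambda>t. snd (F (t, snd p))) (fst p)"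

definition caustic_set :: "(real \<times> real \<Rightarrow> real \<times> real) \<Rightarrow> (real \<times> real) set" where
  "caustic_set F = {F p | p. jacobian_det F p = 0}"

end

theory Submission
  imports Defs
begin

text \<open>In the rescaled coordinates \<open>(x0, y0) = (l\<^sup>2/c) (u, v)\<close> with \<open>c = \<lambda>z/(2\<pi>l)\<close> and
\<open>B = c A'/l\<close>, the Jacobian determinant of the lens map is \<open>3B\<^sup>2 - 4u\<^sup>2 - 12 (v - B/2 + 1/6)\<^sup>2\<close>,
so the critical set is the ellipse \<open>u = (\<surd>3 B/2) sin \<zeta>\<close>, \<open>v = B/2 - 1/6 + (B/2) cos \<zeta>\<close>.
Pushing this ellipse through the map and writing everything in half angles gives the caustic.\<close>

lemma circle_parametrization:
  fixes x y r :: real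
  shows "x\<^sup>2 + y\<^sup>2 = r\<^sup>2 \<longleftrightarrow> (\<exists>w\<in>{0..<2*pi}. x = r * sin w \<and> y = r * cos w)"
proof
  assume circle: "x\<^sup>2 + y\<^sup>2 = r\<^sup>2"
  show "\<exists>w\<in>{0..<2*pi}. x = r * sin w \<and> y = r * cos w"
  proof (cases "r = 0")
    case True
    with circle have "x = 0" "y = 0"
      by (simp_all add: sum_power2_eq_zero_iff)
    with True show ?thesis by (intro bexI[of _ 0]) auto
  next
    case False
    with circle have "(y / r)\<^sup>2 + (x / r)\<^sup>2 = 1"
      by (simp add: power_divide add_divide_distrib[symmetric] add.commute)
    then obtain w where "0 \<le> w" "w < 2*pi" "y / r = cos w" "x / r = sin w"
      by (rule sincos_total_2pi)
    with False show ?thesis by (intro bexI[of _ w]) (auto simp: field_simps)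
  qed
next
  assume "\<exists>w\<in>{0..<2*pi}. x = r * sin w \<and> y = r * cos w"
  then obtain w where "x = r * sin w" "y = r * cos w" by blast
  then show "x\<^sup>2 + y\<^sup>2 = r\<^sup>2"
    by (simp add: power_mult_distrib distrib_left[symmetric])
qed

locale lens =
  fixes lam l a1 a2 a3 z A' :: real
  assumes lam_pos: "lam > 0" and l_pos: "l > 0" and z_pos: "z > 0"
    and A'_eq: "A' = a3 + 4 * pi * l^2 / (3 * lam * z)"
begin

abbreviation F :: "real \<times> real \<Rightarrow> real \<times> real" where
  "F \<equiv> lens_map lam l a1 a2 a3 z"

definition c :: real where
  "c = lam * z / (2 * pi * l)"

definition B :: real where
  "B = c * A' / l"

definition critical_point :: "real \<Rightarrow> real \<times> real" where
  "critical_point w = (l\<^sup>2 / c * (sqrt 3 * B / 2 * sin w), l\<^sup>2 / c * (B / 2 - 1 / 6 + B / 2 * cos w))"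

definition caustic_curve :: "real \<Rightarrow> real \<times> real" where
  "caustic_curve = (\<lambda>\<zeta>. (a1 * lam * z / (2 * pi * l)
            + sqrt 3 * lam * z / (2 * pi * l) * A'^2 * (sin (\<zeta> / 2))^2 * sin \<zeta>,
          a2 * lam * z / (2 * pi * l) - pi * l^3 / (6 * lam * z)
            + 3 * lam * z / (2 * pi * l) * A'^2 * (cos (\<zeta> / 2))^2 * cos \<zeta>))"

lemma c_pos: "c > 0"
  using lam_pos l_pos z_pos by (simp add: c_def)

lemma linear_coefficient: "1 + 2 * c * a3 / l = 2 * B - 1 / 3"
  using lam_pos l_pos z_pos unfolding B_def unfolding A'_eq c_def  \<comment> \<open>\<open>B\<close> first: rewriting \<open>A'\<close> would otherwise hide it\<close>
  by (simp add: field_simps power2_eq_square)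

lemma lens_map_eq:
  "F (x0, y0) = (x0 + c * (a1 + 2 * a3 * x0 / l - 2 * x0 * y0 / l\<^sup>2),
                 y0 + c * (a2 + (3 * y0\<^sup>2 - x0\<^sup>2) / l\<^sup>2))"
  by (simp add: lens_map_def c_def)

lemma jacobian_det_lens_map:
  "jacobian_det F (x0, y0) =
     (1 + 2 * c * a3 / l - 2 * c * y0 / l\<^sup>2) * (1 + 6 * c * y0 / l\<^sup>2) - (2 * c * x0 / l\<^sup>2)\<^sup>2"
proof -
  have "deriv (\<lambda>t. fst (F (t, y0))) x0 = 1 + 2 * c * a3 / l - 2 * c * y0 / l\<^sup>2"
    "deriv (\<lambda>t. snd (F (x0, t))) y0 = 1 + 6 * c * y0 / l\<^sup>2"
    "deriv (\<lambda>t. fst (F (x0, t))) y0 = - 2 * c * x0 / l\<^sup>2"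
    "deriv (\<lambda>t. snd (F (t, y0))) x0 = - 2 * c * x0 / l\<^sup>2"
    unfolding lens_map_eq
    by (rule DERIV_imp_deriv; use l_pos in \<open>auto intro!: derivative_eq_intros simp: field_simps\<close>)+
  then show ?thesis
    by (simp add: jacobian_det_def power2_eq_square)
qed

lemma jacobian_det_scaled:
  "jacobian_det F (l\<^sup>2 / c * u, l\<^sup>2 / c * v) = 3 * B\<^sup>2 - 4 * u\<^sup>2 - 12 * (v - (B / 2 - 1 / 6))\<^sup>2"
  unfolding jacobian_det_lens_map linear_coefficient
  using c_pos l_pos by (simp add: field_simps power2_eq_square)

lemma lens_map_scaled:
  "F (l\<^sup>2 / c * u, l\<^sup>2 / c * v) =
     (a1 * c + l\<^sup>2 / c * (u * (2 * B - 1 / 3 - 2 * v)), a2 * c + l\<^sup>2 / c * (v + 3 * v\<^sup>2 - u\<^sup>2))"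
  unfolding lens_map_eq linear_coefficient[symmetric]
  using c_pos l_pos by (simp add: field_simps power2_eq_square)

lemma jacobian_det_scaled_eq_0_iff:
  "jacobian_det F (l\<^sup>2 / c * u, l\<^sup>2 / c * v) = 0 \<longleftrightarrow>
     (\<exists>w\<in>{0..<2*pi}. (u, v) = (sqrt 3 * B / 2 * sin w, B / 2 - 1 / 6 + B / 2 * cos w))"
proof -
  have cancel: "sqrt 3 * (v - (B / 2 - 1 / 6)) = sqrt 3 * B / 2 * cos w \<longleftrightarrow>
      v = B / 2 - 1 / 6 + B / 2 * cos w" for w
  proof -
    have "sqrt 3 * B / 2 * cos w = sqrt 3 * (B / 2 * cos w)"
      by simp
    then show ?thesis by (simp only: mult_cancel_left) auto
  qed
  have "jacobian_det F (l\<^sup>2 / c * u, l\<^sup>2 / c * v) = 0 \<longleftrightarrow>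
      u\<^sup>2 + (sqrt 3 * (v - (B / 2 - 1 / 6)))\<^sup>2 = (sqrt 3 * B / 2)\<^sup>2"
  proof -
    have "(sqrt 3 * (v - (B / 2 - 1 / 6)))\<^sup>2 = 3 * (v - (B / 2 - 1 / 6))\<^sup>2"
      "(sqrt 3 * B / 2)\<^sup>2 = 3 / 4 * B\<^sup>2"
      by (simp_all add: power_mult_distrib power_divide)
    then show ?thesis
      unfolding jacobian_det_scaled by linarith
  qed
  also have "\<dots> \<longleftrightarrow> (\<exists>w\<in>{0..<2*pi}. u = sqrt 3 * B / 2 * sin w \<and>
                                    sqrt 3 * (v - (B / 2 - 1 / 6)) = sqrt 3 * B / 2 * cos w)"
    by (rule circle_parametrization)
  finally show ?thesis
    by (simp only: cancel prod.inject)
qed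

lemma critical_set_eq: "{p. jacobian_det F p = 0} = critical_point ` {0..<2*pi}"
proof -
  have "jacobian_det F p = 0 \<longleftrightarrow> p \<in> critical_point ` {0..<2*pi}" for p
  proof -
    obtain u v where p: "p = (l\<^sup>2 / c * u, l\<^sup>2 / c * v)"
    proof
      show "p = (l\<^sup>2 / c * (c * fst p / l\<^sup>2), l\<^sup>2 / c * (c * snd p / l\<^sup>2))"
        using c_pos l_pos by (simp add: prod_eq_iff)
    qed
    have critical_point_eq: "critical_point w = p \<longleftrightarrow>
        (sqrt 3 * B / 2 * sin w, B / 2 - 1 / 6 + B / 2 * cos w) = (u, v)" for w
      unfolding critical_point_def p prod.inject mult_cancel_left using c_pos l_pos by auto
    have "jacobian_det F p = 0 \<longleftrightarrow>
        (\<exists>w\<in>{0..<2*pi}. (u, v) = (sqrt 3 * B / 2 * sin w, B / 2 - 1 / 6 + B / 2 * cos w))"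
      unfolding p by (rule jacobian_det_scaled_eq_0_iff)
    also have "\<dots> \<longleftrightarrow> (\<exists>w\<in>{0..<2*pi}. critical_point w = p)"
      unfolding critical_point_eq by (simp only: eq_commute)
    finally show ?thesis by blast
  qed
  then show ?thesis by blast
qed

lemma lens_map_critical_point: "F (critical_point w) = caustic_curve w"
proof -
  define s k where "s = sin (w / 2)" and "k = cos (w / 2)"
  have s_sq: "s\<^sup>2 = 1 - k\<^sup>2" and sin_w: "sin w = 2 * s * k" and cos_w: "cos w = k\<^sup>2 - s\<^sup>2"
    using sin_cos_squared_add[of "w / 2"] sin_double[of "w / 2"] cos_double[of "w / 2"]
    by (simp_all add: s_def k_def eq_diff_eq)
  define u v where "u = sqrt 3 * B / 2 * sin w" and "v = B / 2 - 1 / 6 + B / 2 * cos w"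
  have v_half: "v = B * k\<^sup>2 - 1 / 6" and first_factor: "2 * B - 1 / 3 - 2 * v = 2 * B * s\<^sup>2"
    unfolding v_def cos_w s_sq by (simp_all add: algebra_simps)
  have u_sq: "u\<^sup>2 = 3 * B\<^sup>2 * s\<^sup>2 * k\<^sup>2"
    unfolding u_def sin_w by (simp add: power_mult_distrib)
  have first: "u * (2 * B - 1 / 3 - 2 * v) = sqrt 3 * B\<^sup>2 * s\<^sup>2 * sin w"
    unfolding first_factor u_def by (simp add: power2_eq_square)
  have second: "v + 3 * v\<^sup>2 - u\<^sup>2 = 3 * B\<^sup>2 * k\<^sup>2 * cos w - 1 / 12"
    unfolding u_sq v_half cos_w s_sq by (simp add: algebra_simps power2_eq_square)
  have scale: "l\<^sup>2 / c * B\<^sup>2 = lam * z / (2 * pi * l) * A'\<^sup>2"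
    "a1 * c = a1 * lam * z / (2 * pi * l)" "a2 * c = a2 * lam * z / (2 * pi * l)"
    "l\<^sup>2 / (12 * c) = pi * l ^ 3 / (6 * lam * z)"
    using lam_pos l_pos z_pos unfolding B_def c_def
    by (simp_all add: field_simps power2_eq_square power3_eq_cube)
  have "F (critical_point w) = (a1 * c + l\<^sup>2 / c * B\<^sup>2 * sqrt 3 * s\<^sup>2 * sin w,
                                a2 * c - l\<^sup>2 / (12 * c) + l\<^sup>2 / c * B\<^sup>2 * 3 * k\<^sup>2 * cos w)"
    unfolding critical_point_def u_def[symmetric] v_def[symmetric] lens_map_scaled first second
    by (simp add: algebra_simps)
  also have "\<dots> = caustic_curve w"
    unfolding scale caustic_curve_def s_def k_def using c_pos by (simp add: field_simps)
  finally show ?thesis .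
qed

lemma caustic_set_eq: "caustic_set F = caustic_curve ` {0..<2*pi}"
proof -
  have "caustic_set F = F ` {p. jacobian_det F p = 0}"
    unfolding caustic_set_def by (rule setcompr_eq_image)
  also have "\<dots> = (F \<circ> critical_point) ` {0..<2*pi}"
    unfolding critical_set_eq image_comp ..
  also have "\<dots> = caustic_curve ` {0..<2*pi}"
    by (simp add: comp_def lens_map_critical_point)
  finally show ?thesis .
qed

end

theorem mainTheorem8:
  fixes lam l a1 a2 a3 z :: real
  assumes "lam > 0" and "l > 0" and "z > 0"
  defines "A' \<equiv> a3 + 4 * pi * l^2 / (3 * lam * z)"
  shows "caustic_set (lens_map lam l a1 a2 a3 z) =
    (\<lambda>\<zeta>. (a1 * lam * z / (2 * pi * l)
            + sqrt 3 * lam * z / (2 * pi * l) * A'^2 * (sin (\<zeta> / 2))^2 * sin \<zeta>,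
          a2 * lam * z / (2 * pi * l) - pi * l^3 / (6 * lam * z)
            + 3 * lam * z / (2 * pi * l) * A'^2 * (cos (\<zeta> / 2))^2 * cos \<zeta>)) ` {0..<2 * pi}"
proof -
  interpret lens lam l a1 a2 a3 z A'
    using assms by unfold_locales simp_all
  show ?thesis
    using caustic_set_eq unfolding caustic_curve_def .
qed

end
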